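(* Let $\beta\in(1,2)$ and let $A(\beta)\subset\mathbb{R}^2$ be a planar convex body which has a centre of symmetry, is symmetric with respect to the $y$-axis, and whose boundary within $[-1,1]^2$ coincides with the graph of $y=|x|^\beta$. Then there exists a small positive constant $c$, independent of $\beta$, such that $$|K_{A(\beta)}(\theta+\pi/2,\lambda)|\approx_\beta\begin{cases}\lambda^{1/\beta} & \text{if } 0\leq|\theta|<\lambda^{\frac{\beta-1}{\beta}}<c,\\ \lambda^{1/2}|\theta|^{\frac{2-\beta}{2(\beta-1)}} & \text{if } \lambda^{\frac{\beta-1}{\beta}}\leq|\theta|<c.\end{cases}$$
   Context: For a planar convex body $C$ (compact convex set with nonempty interior), an angle $\theta$ and $\lambda>0$, with $\mathbf{u}(\theta)=(\cos\theta,\sin\theta)$, the chord is $K_C(\theta,\lambda)=\{\mathbf{x}\in C:\mathbf{x}\cdot\mathbf{u}(\theta)=\inf_{\mathbf{y}\in C}\mathbf{y}\cdot\mathbf{u}(\theta)+\lambda\}$, and $|K_C(\theta,\lambda)|$ denotes its length. The notation $f\approx_\beta g$ means there exist positive constants $c_1,c_2$ depending only on $\beta$ with $c_1 g\leq f\leq c_2 g$ on the stated range. *)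

theory Defs
  imports "HOL-Analysis.Analysis"
begin

definition convex_body :: "(real \<times> real) set \<Rightarrow> bool" where
  "convex_body C \<longleftrightarrow> compact C \<and> convex C \<and> interior C \<noteq> {}"

definition udir :: "real \<Rightarrow> real \<times> real" where
  "udir \<theta> = (cos \<theta>, sin \<theta>)"

definition chord :: "(real \<times> real) set \<Rightarrow> real \<Rightarrow> real \<Rightarrow> (real \<times> real) set" where
  "chord C \<theta> l = {x \<in> C. x \<bullet> udir \<theta> = (INF y\<in>C. y \<bullet> udir \<theta>) + l}"

text \<open>Length of the chord (a segment) = its diameter.\<close>
definition chord_len :: "(real \<times> real) set \<Rightarrow> real \<Rightarrow> real \<Rightarrow> real" where
  "chord_len C \<theta> l = diameter (chord C \<theta> l)"

definition has_centre_of_symmetry :: "(real \<times> real) set \<Rightarrow> bool" where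
  "has_centre_of_symmetry C \<longleftrightarrow> (\<exists>p. \<forall>x. x \<in> C \<longleftrightarrow> (2::real) *\<^sub>R p - x \<in> C)"

definition y_axis_symmetric :: "(real \<times> real) set \<Rightarrow> bool" where
  "y_axis_symmetric C \<longleftrightarrow> (\<forall>x y. (x, y) \<in> C \<longleftrightarrow> (-x, y) \<in> C)"

definition boundary_graph :: "real \<Rightarrow> (real \<times> real) set \<Rightarrow> bool" where
  "boundary_graph \<beta> C \<longleftrightarrow>
     frontier C \<inter> ({-1..1} \<times> {-1..1}) = {(x, \<bar>x\<bar> powr \<beta>) | x. -1 \<le> x \<and> x \<le> 1}"

end

theory Submission
  imports Defs
begin

text \<open>For small \<open>\<theta>\<close> the chord in direction \<open>\<theta> + pi/2\<close> at height \<open>\<lambda>\<close> lies on the line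
  of slope \<open>s = tan \<theta>\<close> that is \<open>\<lambda> / cos \<theta>\<close> above the supporting line of that slope.
  Near the origin this supporting line is the tangent of \<open>y = \<bar>x\<bar> powr \<beta>\<close> at \<open>\<plusminus>a\<close> with
  \<open>a powr (\<beta> - 1) = \<bar>s\<bar> / \<beta>\<close>, which is comparable to \<open>\<bar>\<theta>\<bar>\<close>, and convexity keeps
  the part of the body outside the unit square away from the chord. So the chord length is
  comparable to the width of the sublevel set \<open>{G \<le> \<lambda>}\<close> of the height \<open>G\<close> of the graph
  above the tangent. By Taylor's formula \<open>G (a + v)\<close> is comparable to
  \<open>(a + \<bar>v\<bar>) powr (\<beta> - 2) * v\<^sup>2\<close>, so the width is of order \<open>\<lambda> powr (1/\<beta>)\<close> when
  \<open>a powr \<beta>\<close> is at most of order \<open>\<lambda>\<close>, and of order \<open>\<lambda> powr (1/2) * a powr ((2 - \<beta>)/2)\<close>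
  otherwise; the threshold \<open>a powr \<beta> \<approx> \<lambda>\<close> is \<open>\<bar>\<theta>\<bar> \<approx> \<lambda> powr ((\<beta> - 1)/\<beta>)\<close>.\<close>

section \<open>Powers\<close>

lemma powr_Taylor2:
  fixes b a x :: real
  assumes a: "0 < a" and x: "0 < x"
  obtains t where "min a x \<le> t" "t \<le> max a x" "0 < t"
    "x powr b = a powr b + b * a powr (b - 1) * (x - a) + b * (b - 1) / 2 * t powr (b - 2) * (x - a)^2"
proof (cases "x = a")
  case True
  then show ?thesis using a by (intro that[of a]) auto
next
  case False
  define d :: "nat \<Rightarrow> real \<Rightarrow> real" where
    "d m t = (if m = 0 then t powr b else if m = 1 then b * t powr (b - 1) else b * (b - 1) * t powr (b - 2))"
    for m t
  have D: "DERIV (d m) t :> d (Suc m) t" if "m < 2" "min a x \<le> t" "t \<le> max a x" for m t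
  proof -
    have t: "0 < t" using that a x by (auto simp: min_def split: if_splits)
    consider "m = 0" | "m = 1" using \<open>m < 2\<close> by linarith
    then show ?thesis
    proof cases
      case 1
      then show ?thesis unfolding d_def using has_real_derivative_powr[OF t, of b] by simp
    next
      case 2
      have "DERIV (\<lambda>t. b * t powr (b - 1)) t :> b * ((b - 1) * t powr (b - 1 - 1))"
        by (intro DERIV_cmult has_real_derivative_powr t)
      then show ?thesis unfolding d_def 2 by (simp add: algebra_simps)
    qed
  qed
  have "\<exists>t. (if x < a then x < t \<and> t < a else a < t \<and> t < x) \<and>
      x powr b = (\<Sum>m<2. d m a / fact m * (x - a)^m) + d 2 t / fact 2 * (x - a)^2"
    by (rule Taylor[of 2 d "\<lambda>t. t powr b" "min a x" "max a x" a x])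
      (use D False in \<open>auto simp: d_def\<close>)
  then obtain t where t: "if x < a then x < t \<and> t < a else a < t \<and> t < x"
    and e: "x powr b = (\<Sum>m<2. d m a / fact m * (x - a)^m) + d 2 t / fact 2 * (x - a)^2"
    by blast
  show ?thesis
  proof (rule that)
    show "min a x \<le> t" "t \<le> max a x" "0 < t" using t a x by (auto split: if_splits)
    show "x powr b = a powr b + b * a powr (b - 1) * (x - a) + b * (b - 1) / 2 * t powr (b - 2) * (x - a)^2"
      using e by (simp add: d_def numeral_2_eq_2 lessThan_Suc)
  qed
qed

lemma powr_mult_square:
  fixes v b :: real
  assumes "0 \<le> v"
  shows "v powr (b - 2) * v^2 = v powr b"
proof -
  have "v powr (b - 2) * v powr 2 = v powr b"
    by (simp only: powr_add[symmetric]) simp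
  then show ?thesis using assms by simp
qed

lemma power2_powr_half: "(x powr (c / 2))^2 = x powr (c::real)"
  by (simp add: power2_eq_square powr_add[symmetric])

lemma powr_add_le:
  fixes u v \<beta> :: real
  assumes "0 \<le> u" "0 \<le> v" "0 \<le> \<beta>"
  shows "(u + v) powr \<beta> \<le> 2 powr \<beta> * (u powr \<beta> + v powr \<beta>)"
proof -
  have "(u + v) powr \<beta> \<le> (2 * max u v) powr \<beta>"
    using assms by (intro powr_mono2) auto
  also have "\<dots> = 2 powr \<beta> * max u v powr \<beta>"
    by (simp add: powr_mult)
  also have "max u v powr \<beta> \<le> u powr \<beta> + v powr \<beta>"
    by (simp add: max_def)
  finally show ?thesis by simp
qed

lemma le_powr_inverse:
  fixes a b k :: real
  assumes "0 \<le> a" "0 < k" "a powr k \<le> b"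
  shows "a \<le> b powr (1 / k)"
proof -
  have "a = (a powr k) powr (1 / k)"
    using assms by (simp add: powr_powr)
  also have "\<dots> \<le> b powr (1 / k)"
    using assms by (intro powr_mono2) auto
  finally show ?thesis .
qed

lemma less_if_powr_less:
  fixes x c e :: real
  assumes "0 < e" "e \<le> 1" "0 \<le> x" "x powr e < c" "c \<le> 1"
  shows "x < c"
proof (rule ccontr)
  assume "\<not> x < c"
  have "0 \<le> c"
    using powr_ge_zero[of x e] assms(4) by linarith
  then have "c \<le> c powr e"
    using powr_mono'[of e 1 c] assms by simp
  also have "c powr e \<le> x powr e"
    using \<open>\<not> x < c\<close> \<open>0 \<le> c\<close> assms by (intro powr_mono2) auto
  finally show False
    using assms(4) by simp
qed

section \<open>The height of the graph of \<open>\<bar>x\<bar> powr \<beta>\<close> above its tangents\<close>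

definition tangency_point :: "real \<Rightarrow> real \<Rightarrow> real" where
  "tangency_point \<beta> \<sigma> = (\<sigma> / \<beta>) powr (1 / (\<beta> - 1))"

text \<open>For \<open>s \<ge> 0\<close> the line \<open>y = s * x + tangent_intercept \<beta> s\<close> is the tangent of
  \<open>y = \<bar>x\<bar> powr \<beta>\<close> at \<open>x = tangency_point \<beta> s\<close>, for \<open>s \<le> 0\<close> its mirror image.\<close>
definition tangent_intercept :: "real \<Rightarrow> real \<Rightarrow> real" where
  "tangent_intercept \<beta> s = (1 - \<beta>) * tangency_point \<beta> \<bar>s\<bar> powr \<beta>"

definition tangency_abscissa :: "real \<Rightarrow> real \<Rightarrow> real" where
  "tangency_abscissa \<beta> s = (if s < 0 then - tangency_point \<beta> \<bar>s\<bar> else tangency_point \<beta> \<bar>s\<bar>)"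

definition tangent_gap :: "real \<Rightarrow> real \<Rightarrow> real \<Rightarrow> real" where
  "tangent_gap \<beta> s x = \<bar>x\<bar> powr \<beta> - (s * x + tangent_intercept \<beta> s)"

text \<open>For \<open>\<sigma> \<ge> 0\<close> and \<open>a = tangency_point \<beta> \<sigma>\<close>, \<open>tangent_gap \<beta> \<sigma> (a + v)\<close> equals
  \<open>gap_scale \<beta> a \<bar>v\<bar>\<close> up to factors depending only on \<open>\<beta>\<close>; the latter behaves like
  \<open>v powr \<beta>\<close> for \<open>v \<ge> a\<close> and like \<open>a powr (\<beta> - 2) * v\<^sup>2\<close> for \<open>v \<le> a\<close>.\<close>
definition gap_scale :: "real \<Rightarrow> real \<Rightarrow> real \<Rightarrow> real" where
  "gap_scale \<beta> a v = (a + v) powr (\<beta> - 2) * v^2"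

lemma tangency_point_nonneg: "0 \<le> tangency_point \<beta> \<sigma>"
  by (simp add: tangency_point_def)

lemma tangency_point_pos: "0 < \<beta> \<Longrightarrow> 0 < \<sigma> \<Longrightarrow> 0 < tangency_point \<beta> \<sigma>"
  by (simp add: tangency_point_def)

lemma tangency_point_powr:
  assumes "1 < \<beta>" "0 \<le> \<sigma>"
  shows "tangency_point \<beta> \<sigma> powr (\<beta> - 1) = \<sigma> / \<beta>"
  using assms by (cases "\<sigma> = 0") (simp_all add: tangency_point_def powr_powr)

lemma tangency_point_le:
  assumes "1 < \<beta>" "\<beta> \<le> 2" "0 \<le> \<sigma>" "\<sigma> \<le> 1"
  shows "tangency_point \<beta> \<sigma> \<le> \<sigma>"
proof (cases "\<sigma> = 0")
  case False
  have "\<sigma> / \<beta> \<le> \<sigma>"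
    using assms by (simp add: divide_le_eq mult_le_cancel_left1)
  moreover have "(\<sigma> / \<beta>) powr (1 / (\<beta> - 1)) \<le> \<sigma> / \<beta>"
    using assms False \<open>\<sigma> / \<beta> \<le> \<sigma>\<close> by (intro powr_le_one_le) (auto simp: field_simps)
  ultimately show ?thesis by (simp add: tangency_point_def)
qed (simp add: tangency_point_def)

lemma tangent_gap_uminus: "tangent_gap \<beta> (- s) (- x) = tangent_gap \<beta> s x"
  by (simp add: tangent_gap_def tangent_intercept_def)

lemma tangent_gap_abs_slope:
  "tangent_gap \<beta> \<bar>s\<bar> x = tangent_gap \<beta> s (if s < 0 then - x else x)"
  using tangent_gap_uminus[of \<beta> s "- x"] by auto

lemma tangent_gap_eq:
  assumes "1 < \<beta>" "0 \<le> \<sigma>" "0 \<le> x"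
  defines "a \<equiv> tangency_point \<beta> \<sigma>"
  shows "tangent_gap \<beta> \<sigma> x = x powr \<beta> - a powr \<beta> - \<beta> * a powr (\<beta> - 1) * (x - a)"
proof -
  have \<sigma>: "\<sigma> = \<beta> * a powr (\<beta> - 1)"
    using tangency_point_powr[of \<beta> \<sigma>] assms by (simp add: a_def)
  have a: "a powr \<beta> = a * a powr (\<beta> - 1)"
    by (simp add: a_def tangency_point_nonneg powr_mult_base)
  have "tangent_gap \<beta> \<sigma> x = x powr \<beta> - \<sigma> * x + (\<beta> - 1) * a powr \<beta>"
    using assms by (simp add: tangent_gap_def tangent_intercept_def a_def algebra_simps)
  also have "\<dots> = x powr \<beta> - a powr \<beta> - \<beta> * a powr (\<beta> - 1) * (x - a)"
    unfolding \<sigma> a by (simp add: algebra_simps)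
  finally show ?thesis .
qed

lemma tangent_gap_Taylor:
  assumes "1 < \<beta>" "0 < \<sigma>" "0 < x"
  defines "a \<equiv> tangency_point \<beta> \<sigma>"
  obtains t where "min a x \<le> t" "t \<le> max a x" "0 < t"
    "tangent_gap \<beta> \<sigma> x = \<beta> * (\<beta> - 1) / 2 * t powr (\<beta> - 2) * (x - a)^2"
proof -
  have "0 < a" using assms by (simp add: a_def tangency_point_pos)
  obtain t where t: "min a x \<le> t" "t \<le> max a x" "0 < t" and e:
    "x powr \<beta> = a powr \<beta> + \<beta> * a powr (\<beta> - 1) * (x - a) + \<beta> * (\<beta> - 1) / 2 * t powr (\<beta> - 2) * (x - a)^2"
    using powr_Taylor2[OF \<open>0 < a\<close> \<open>0 < x\<close>] by blast
  moreover have "tangent_gap \<beta> \<sigma> x = x powr \<beta> - a powr \<beta> - \<beta> * a powr (\<beta> - 1) * (x - a)"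
    using tangent_gap_eq[of \<beta> \<sigma> x] assms by (simp add: a_def)
  ultimately show ?thesis
    using that by simp
qed

lemma gap_scale_nonneg: "0 \<le> gap_scale \<beta> a v"
  by (simp add: gap_scale_def)

lemma gap_scale_le_powr:
  assumes "0 \<le> a" "0 \<le> v" "\<beta> \<le> 2"
  shows "gap_scale \<beta> a v \<le> v powr \<beta>"
proof (cases "v = 0")
  case False
  then have "(a + v) powr (\<beta> - 2) * v^2 \<le> v powr (\<beta> - 2) * v^2"
    using assms by (intro mult_right_mono powr_mono2') auto
  then show ?thesis using False assms powr_mult_square[of v \<beta>] by (simp add: gap_scale_def)
qed (simp add: gap_scale_def)

lemma gap_scale_le_quadratic:
  assumes "0 < a" "0 \<le> v" "\<beta> \<le> 2"
  shows "gap_scale \<beta> a v \<le> a powr (\<beta> - 2) * v^2"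
  unfolding gap_scale_def using assms by (intro mult_right_mono powr_mono2') auto

lemma gap_scale_ge:
  assumes "1 \<le> \<beta>" "\<beta> \<le> 2" "0 \<le> K" "0 < z" "0 \<le> a" "0 \<le> w" "a + w \<le> (1 + K) * z"
  shows "z powr (\<beta> - 2) * w^2 / (1 + K) \<le> gap_scale \<beta> a w"
proof (cases "w = 0")
  case False
  have "(1 + K) powr (-1) \<le> (1 + K) powr (\<beta> - 2)"
    using assms by (intro powr_mono) auto
  then have "z powr (\<beta> - 2) / (1 + K) \<le> (1 + K) powr (\<beta> - 2) * z powr (\<beta> - 2)"
    using assms by (simp add: powr_minus divide_inverse mult_right_mono)
  also have "\<dots> = ((1 + K) * z) powr (\<beta> - 2)"
    by (simp add: powr_mult)
  also have "\<dots> \<le> (a + w) powr (\<beta> - 2)"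
    using assms False by (intro powr_mono2') auto
  finally have "z powr (\<beta> - 2) / (1 + K) * w^2 \<le> (a + w) powr (\<beta> - 2) * w^2"
    by (rule mult_right_mono) simp
  then show ?thesis
    by (simp add: gap_scale_def)
qed (simp add: gap_scale_def)

lemma gap_scale_le_sum_powr:
  assumes "0 \<le> a" "0 \<le> y" "0 \<le> \<beta>" "\<beta> \<le> 2"
  shows "gap_scale \<beta> a (a + y) \<le> 4 * (a powr \<beta> + y powr \<beta>)"
proof -
  have "gap_scale \<beta> a (a + y) \<le> (a + y) powr \<beta>"
    using assms by (intro gap_scale_le_powr) auto
  also have "\<dots> \<le> 2 powr \<beta> * (a powr \<beta> + y powr \<beta>)"
    using assms by (intro powr_add_le) auto
  also have "\<dots> \<le> 4 * (a powr \<beta> + y powr \<beta>)"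
    using powr_mono[of \<beta> 2 2] assms by (intro mult_right_mono) auto
  finally show ?thesis .
qed

lemma gap_scale_mono:
  assumes "0 \<le> a" "0 \<le> v" "v \<le> w" "0 \<le> \<beta>" "\<beta> \<le> 2"
  shows "gap_scale \<beta> a v \<le> gap_scale \<beta> a w"
proof (cases "v = 0")
  case False
  have eq: "gap_scale \<beta> a u = u powr \<beta> * (u / (a + u)) powr (2 - \<beta>)" if "0 < u" for u
  proof -
    have "u powr \<beta> * u powr (2 - \<beta>) = u^2"
      using that by (simp add: powr_add[symmetric])
    moreover have "(a + u) powr (\<beta> - 2) = 1 / (a + u) powr (2 - \<beta>)"
      by (simp add: powr_minus[of _ "2 - \<beta>", simplified] divide_inverse)
    ultimately show ?thesis
      unfolding gap_scale_def powr_divide by simp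
  qed
  have "v / (a + v) \<le> w / (a + w)"
    using assms False by (simp add: field_simps mult_left_mono)
  then have "v powr \<beta> * (v / (a + v)) powr (2 - \<beta>) \<le> w powr \<beta> * (w / (a + w)) powr (2 - \<beta>)"
    using assms False by (intro mult_mono powr_mono2) auto
  then show ?thesis using assms False eq[of v] eq[of w] by simp
qed (simp add: gap_scale_def)

lemma tangent_gap_ge:
  assumes "1 < \<beta>" "\<beta> < 2" "0 \<le> \<sigma>"
  defines "a \<equiv> tangency_point \<beta> \<sigma>"
  shows "(\<beta> - 1) / 4 * gap_scale \<beta> a \<bar>x - a\<bar> \<le> tangent_gap \<beta> \<sigma> x"
proof -
  have "0 \<le> a" by (simp add: a_def tangency_point_nonneg)
  consider "x \<le> 0 \<or> \<sigma> = 0" | "0 < x" "0 < \<sigma>"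
    using assms by linarith
  then show ?thesis
  proof cases
    case 1
    have "\<sigma> = 0 \<Longrightarrow> a = 0"
      by (simp add: a_def tangency_point_def)
    then have "\<bar>x - a\<bar> = a + \<bar>x\<bar>" "0 \<le> - (\<sigma> * x)"
      using 1 \<open>0 \<le> a\<close> assms by (auto simp: mult_nonneg_nonpos)
    then have "(\<beta> - 1) / 4 * gap_scale \<beta> a \<bar>x - a\<bar> \<le> (\<beta> - 1) / 4 * (4 * (a powr \<beta> + \<bar>x\<bar> powr \<beta>))"
      using gap_scale_le_sum_powr[of a "\<bar>x\<bar>" \<beta>] \<open>0 \<le> a\<close> assms by (intro mult_left_mono) auto
    also have "\<dots> \<le> \<bar>x\<bar> powr \<beta> - \<sigma> * x + (\<beta> - 1) * a powr \<beta>"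
      using \<open>0 \<le> - (\<sigma> * x)\<close> assms mult_left_le_one_le[of "\<bar>x\<bar> powr \<beta>" "\<beta> - 1"]
      by (simp add: distrib_left)
    finally show ?thesis
      using assms by (simp add: tangent_gap_def tangent_intercept_def a_def algebra_simps)
  next
    case 2
    obtain t where t: "min a x \<le> t" "t \<le> max a x" "0 < t"
      and G: "tangent_gap \<beta> \<sigma> x = \<beta> * (\<beta> - 1) / 2 * t powr (\<beta> - 2) * (x - a)^2"
      using tangent_gap_Taylor[of \<beta> \<sigma> x] assms 2 unfolding a_def by blast
    have "(a + \<bar>x - a\<bar>) powr (\<beta> - 2) \<le> t powr (\<beta> - 2)"
      using t assms by (intro powr_mono2') (auto simp: max_def split: if_splits)
    then have "gap_scale \<beta> a \<bar>x - a\<bar> \<le> t powr (\<beta> - 2) * (x - a)^2"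
      unfolding gap_scale_def power2_abs by (intro mult_right_mono) auto
    moreover have "(\<beta> - 1) / 4 \<le> \<beta> * (\<beta> - 1) / 2"
      using assms mult_right_mono[of 1 \<beta> "\<beta> - 1"] by (simp add: field_simps)
    ultimately have "(\<beta> - 1) / 4 * gap_scale \<beta> a \<bar>x - a\<bar> \<le> \<beta> * (\<beta> - 1) / 2 * (t powr (\<beta> - 2) * (x - a)^2)"
      using assms by (intro mult_mono) (auto simp: gap_scale_nonneg)
    then show ?thesis using G by (simp add: mult.assoc)
  qed
qed

lemma tangent_gap_le_quadratic:
  assumes "1 < \<beta>" "\<beta> < 2" "0 \<le> \<sigma>" "0 < v" "v \<le> tangency_point \<beta> \<sigma>"
  shows "tangent_gap \<beta> \<sigma> (tangency_point \<beta> \<sigma> + v) \<le> tangency_point \<beta> \<sigma> powr (\<beta> - 2) * v^2"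
proof -
  let ?a = "tangency_point \<beta> \<sigma>"
  have "\<sigma> = 0 \<Longrightarrow> ?a = 0"
    by (simp add: tangency_point_def)
  then have "0 < \<sigma>"
    using assms by (cases "\<sigma> = 0") auto
  then obtain t where t: "min ?a (?a + v) \<le> t" "0 < t"
    and G: "tangent_gap \<beta> \<sigma> (?a + v) = \<beta> * (\<beta> - 1) / 2 * t powr (\<beta> - 2) * (?a + v - ?a)^2"
    using tangent_gap_Taylor[of \<beta> \<sigma> "?a + v"] assms by (metis add_pos_pos order_less_le_trans)
  have "tangent_gap \<beta> \<sigma> (?a + v) = \<beta> * (\<beta> - 1) / 2 * (t powr (\<beta> - 2) * v^2)"
    using G by simp
  also have "\<dots> \<le> 1 * (?a powr (\<beta> - 2) * v^2)"
  proof (rule mult_mono)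
    show "\<beta> * (\<beta> - 1) / 2 \<le> 1"
      using assms mult_mono[of \<beta> 2 "\<beta> - 1" 1] by simp
    show "t powr (\<beta> - 2) * v^2 \<le> ?a powr (\<beta> - 2) * v^2"
      using t assms by (intro mult_right_mono powr_mono2') auto
  qed simp_all
  finally show ?thesis by simp
qed

lemma tangent_gap_le:
  assumes "1 < \<beta>" "\<beta> < 2" "0 \<le> \<sigma>" "0 \<le> v"
  defines "a \<equiv> tangency_point \<beta> \<sigma>"
  shows "tangent_gap \<beta> \<sigma> (a + v) \<le> 4 * gap_scale \<beta> a v"
proof -
  have "0 \<le> a" by (simp add: a_def tangency_point_nonneg)
  have G: "tangent_gap \<beta> \<sigma> (a + v) = (a + v) powr \<beta> - a powr \<beta> - \<beta> * a powr (\<beta> - 1) * v"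
    using tangent_gap_eq[of \<beta> \<sigma> "a + v"] \<open>0 \<le> a\<close> assms by (simp add: a_def)
  consider "v = 0" | "0 < v" "v \<le> a" | "a < v"
    using assms by linarith
  then show ?thesis
  proof cases
    case 1
    then show ?thesis using G by (simp add: gap_scale_def)
  next
    case 2
    then have "tangent_gap \<beta> \<sigma> (a + v) \<le> a powr (\<beta> - 2) * v^2"
      unfolding a_def using assms by (intro tangent_gap_le_quadratic) auto
    also have "\<dots> \<le> 2 * gap_scale \<beta> a v"
      using gap_scale_ge[of \<beta> 1 a a v] 2 assms by simp
    finally show ?thesis using gap_scale_nonneg[of \<beta> a v] by linarith
  next
    case 3
    have "0 \<le> \<beta> * a powr (\<beta> - 1) * v"
      using assms by simp
    then have "tangent_gap \<beta> \<sigma> (a + v) \<le> (a + v) powr \<beta>"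
      using G powr_ge_zero[of a \<beta>] by linarith
    also have "\<dots> = (a + v) powr (\<beta> - 2) * (a + v)^2"
      using powr_mult_square[of "a + v" \<beta>] \<open>0 \<le> a\<close> assms by simp
    also have "\<dots> \<le> (a + v) powr (\<beta> - 2) * (2 * v)^2"
      using 3 \<open>0 \<le> a\<close> by (intro mult_left_mono power_mono) auto
    finally show ?thesis by (simp add: gap_scale_def power_mult_distrib)
  qed
qed

lemma tangent_gap_nonneg:
  assumes "1 < \<beta>" "\<beta> < 2"
  shows "0 \<le> tangent_gap \<beta> s x"
proof -
  let ?y = "if s < 0 then - x else x"
  have "0 \<le> (\<beta> - 1) / 4 * gap_scale \<beta> (tangency_point \<beta> \<bar>s\<bar>) \<bar>?y - tangency_point \<beta> \<bar>s\<bar>\<bar>"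
    using assms by (simp add: gap_scale_nonneg)
  then have "0 \<le> tangent_gap \<beta> \<bar>s\<bar> ?y"
    using tangent_gap_ge[of \<beta> "\<bar>s\<bar>" ?y] assms by linarith
  then show ?thesis
    using tangent_gap_abs_slope[of \<beta> s ?y] by (cases "s < 0") auto
qed

lemma tangent_gap_tangency_point:
  assumes "1 < \<beta>" "\<beta> < 2" "0 \<le> \<sigma>"
  shows "tangent_gap \<beta> \<sigma> (tangency_point \<beta> \<sigma>) = 0"
proof -
  have "tangent_gap \<beta> \<sigma> (tangency_point \<beta> \<sigma>) \<le> 0"
    using tangent_gap_le[OF assms order_refl] by (simp add: gap_scale_def)
  then show ?thesis using tangent_gap_nonneg[OF assms(1,2)] by (simp add: order_antisym)
qed

lemma tangent_gap_tangency_abscissa: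
  assumes "1 < \<beta>" "\<beta> < 2"
  shows "tangent_gap \<beta> s (tangency_abscissa \<beta> s) = 0"
  using tangent_gap_tangency_point[OF assms, of "\<bar>s\<bar>"] tangent_gap_abs_slope[of \<beta> s]
  by (simp add: tangency_abscissa_def)

lemma tangent_gap_sublevel_near_tangency:
  assumes "1 < \<beta>" "\<beta> < 2" "0 \<le> \<sigma>" "0 \<le> w"
    and "4 * \<mu> < (\<beta> - 1) * gap_scale \<beta> (tangency_point \<beta> \<sigma>) w"
    and "tangent_gap \<beta> \<sigma> x \<le> \<mu>"
  shows "\<bar>x - tangency_point \<beta> \<sigma>\<bar> < w"
proof (rule ccontr)
  let ?a = "tangency_point \<beta> \<sigma>"
  assume "\<not> \<bar>x - ?a\<bar> < w"
  then have "gap_scale \<beta> ?a w \<le> gap_scale \<beta> ?a \<bar>x - ?a\<bar>"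
    using assms by (intro gap_scale_mono) (auto simp: tangency_point_nonneg)
  then have "(\<beta> - 1) * gap_scale \<beta> ?a w \<le> (\<beta> - 1) * gap_scale \<beta> ?a \<bar>x - ?a\<bar>"
    using assms by (intro mult_left_mono) auto
  moreover have "(\<beta> - 1) * gap_scale \<beta> ?a \<bar>x - ?a\<bar> \<le> 4 * tangent_gap \<beta> \<sigma> x"
    using tangent_gap_ge[of \<beta> \<sigma> x] assms by simp
  ultimately show False
    using assms by linarith
qed

lemma tangent_gap_le_at_vertex_scale:
  assumes "1 < \<beta>" "\<beta> < 2" "0 \<le> \<sigma>" "0 < l"
  shows "tangent_gap \<beta> \<sigma> (tangency_point \<beta> \<sigma> + l powr (1 / \<beta>) / 4) \<le> l"
proof -
  let ?a = "tangency_point \<beta> \<sigma>" and ?w = "l powr (1 / \<beta>) / 4"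
  have "tangent_gap \<beta> \<sigma> (?a + ?w) \<le> 4 * gap_scale \<beta> ?a ?w"
    using assms by (intro tangent_gap_le) auto
  also have "gap_scale \<beta> ?a ?w \<le> ?w powr \<beta>"
    using assms by (intro gap_scale_le_powr) (auto simp: tangency_point_nonneg)
  also have "?w powr \<beta> = l / 4 powr \<beta>"
    using assms by (simp add: powr_divide powr_powr)
  also have "4 * (l / 4 powr \<beta>) \<le> l"
    using assms powr_mono[of 1 \<beta> 4] by (simp add: field_simps)
  finally show ?thesis by simp
qed

lemma tangent_gap_sublevel_vertex_scale:
  assumes "1 < \<beta>" "\<beta> < 2" "0 \<le> \<sigma>" "0 < l" "0 \<le> D"
    and "tangency_point \<beta> \<sigma> \<le> D * l powr (1 / \<beta>)"
    and "tangent_gap \<beta> \<sigma> x \<le> 2 * l"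
  shows "\<bar>x - tangency_point \<beta> \<sigma>\<bar> < (D + 16 / (\<beta> - 1) + 1) * l powr (1 / \<beta>)"
proof -
  define a where "a = tangency_point \<beta> \<sigma>"
  define C where "C = D + 16 / (\<beta> - 1) + 1"
  define w where "w = C * l powr (1 / \<beta>)"
  have "1 \<le> C" "D \<le> C" "16 / (\<beta> - 1) < C"
    using assms by (auto simp: C_def)
  then have "0 < w" "a \<le> w"
    using assms by (auto simp: w_def a_def intro: order_trans mult_right_mono)
  have "C * l \<le> C powr \<beta> * l"
    using powr_mono[of 1 \<beta> C] \<open>1 \<le> C\<close> assms by simp
  also have "\<dots> = w powr \<beta>"
    using assms by (simp add: w_def powr_mult powr_powr)
  also have "\<dots> = w powr (\<beta> - 2) * w^2"
    using \<open>0 < w\<close> by (simp add: powr_mult_square)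
  also have "\<dots> \<le> 2 * gap_scale \<beta> a w"
    using gap_scale_ge[of \<beta> 1 w a w] \<open>0 < w\<close> \<open>a \<le> w\<close> assms
    by (simp add: a_def tangency_point_nonneg)
  finally have "(\<beta> - 1) * (C * l) \<le> 2 * ((\<beta> - 1) * gap_scale \<beta> a w)"
    using assms mult_left_mono[of "C * l" _ "\<beta> - 1"] by simp
  moreover have "16 * l < (\<beta> - 1) * (C * l)"
    using \<open>16 / (\<beta> - 1) < C\<close> assms mult_strict_right_mono[of "16 / (\<beta> - 1)" C l]
    by (simp add: field_simps)
  ultimately have "4 * (2 * l) < (\<beta> - 1) * gap_scale \<beta> a w"
    by linarith
  then have "\<bar>x - a\<bar> < w"
    unfolding a_def using assms \<open>0 < w\<close> by (intro tangent_gap_sublevel_near_tangency) auto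
  then show ?thesis by (simp add: a_def w_def C_def)
qed

lemma tangent_scale_square:
  fixes l a \<beta> :: real
  assumes "0 \<le> l"
  shows "(l powr (1 / 2) * a powr ((2 - \<beta>) / 2))^2 = l * a powr (2 - \<beta>)"
  using power2_powr_half[of l 1] power2_powr_half[of a "2 - \<beta>"] assms by (simp add: power_mult_distrib)

lemma tangent_scale_le:
  fixes l a R \<beta> :: real
  assumes "0 < a" "0 \<le> l" "0 \<le> R" "l \<le> R^2 * a powr \<beta>"
  shows "l powr (1 / 2) * a powr ((2 - \<beta>) / 2) \<le> R * a"
proof -
  have "(l powr (1 / 2) * a powr ((2 - \<beta>) / 2))^2 \<le> R^2 * a powr \<beta> * a powr (2 - \<beta>)"
    unfolding tangent_scale_square[OF assms(2)] using assms by (intro mult_right_mono) auto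
  also have "\<dots> = (R * a)^2"
    using assms by (simp add: powr_add[symmetric] power_mult_distrib)
  finally show ?thesis
    using assms by (simp add: power2_le_iff_abs_le)
qed

lemma tangent_gap_le_at_tangent_scale:
  assumes "1 < \<beta>" "\<beta> < 2" "0 < \<sigma>" "0 < l"
  defines "a \<equiv> tangency_point \<beta> \<sigma>"
  shows "tangent_gap \<beta> \<sigma> (a + l powr (1 / 2) * a powr ((2 - \<beta>) / 2) / 2) \<le> l"
proof -
  define T where "T = l powr (1 / 2) * a powr ((2 - \<beta>) / 2)"
  have "0 < a" using assms by (simp add: a_def tangency_point_pos)
  have "tangent_gap \<beta> \<sigma> (a + T / 2) \<le> 4 * gap_scale \<beta> a (T / 2)"
    unfolding a_def using assms by (intro tangent_gap_le) (auto simp: T_def)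
  also have "gap_scale \<beta> a (T / 2) \<le> a powr (\<beta> - 2) * (T / 2)^2"
    using \<open>0 < a\<close> assms by (intro gap_scale_le_quadratic) (auto simp: T_def)
  also have "4 * (a powr (\<beta> - 2) * (T / 2)^2) = a powr (\<beta> - 2) * a powr (2 - \<beta>) * l"
    using tangent_scale_square[of l a \<beta>] assms by (simp add: T_def power_divide)
  also have "\<dots> = l"
    using \<open>0 < a\<close> by (simp add: powr_add[symmetric])
  finally show ?thesis by (simp add: T_def)
qed

lemma gap_scale_at_tangent_scale:
  assumes "1 \<le> \<beta>" "\<beta> \<le> 2" "0 < a" "0 < l" "1 \<le> C" "1 \<le> R" "l \<le> R^2 * a powr \<beta>"
  defines "T \<equiv> l powr (1 / 2) * a powr ((2 - \<beta>) / 2)"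
  shows "C * l / (2 * R) \<le> gap_scale \<beta> a (C * T)"
proof -
  have "T \<le> R * a"
    unfolding T_def using assms by (intro tangent_scale_le) auto
  then have "a + C * T \<le> (1 + C * R) * a"
    using assms by (simp add: algebra_simps mult_left_mono)
  then have "a powr (\<beta> - 2) * (C * T)^2 / (1 + C * R) \<le> gap_scale \<beta> a (C * T)"
    using assms by (intro gap_scale_ge) (auto simp: T_def)
  moreover have "a powr (\<beta> - 2) * (C * T)^2 = C^2 * l"
    using tangent_scale_square[of l a \<beta>] assms
    by (simp add: T_def power_mult_distrib powr_add[symmetric])
  moreover have "C * l / (2 * R) \<le> C^2 * l / (1 + C * R)"
  proof -
    have "1 + C * R \<le> 2 * C * R"
      using assms mult_mono[of 1 C 1 R] by simp
    then show ?thesis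
      using assms by (simp add: field_simps power2_eq_square mult_left_mono)
  qed
  ultimately show ?thesis by simp
qed

lemma tangent_gap_sublevel_tangent_scale:
  assumes "1 < \<beta>" "\<beta> < 2" "0 < \<sigma>" "0 < l" "1 \<le> R"
    and "l \<le> R^2 * tangency_point \<beta> \<sigma> powr \<beta>"
    and "tangent_gap \<beta> \<sigma> x \<le> 2 * l"
  defines "a \<equiv> tangency_point \<beta> \<sigma>"
  shows "\<bar>x - a\<bar> < (1 + 16 * R / (\<beta> - 1)) * (l powr (1 / 2) * a powr ((2 - \<beta>) / 2))"
proof -
  define C where "C = 1 + 16 * R / (\<beta> - 1)"
  define w where "w = C * (l powr (1 / 2) * a powr ((2 - \<beta>) / 2))"
  have "0 < a" using assms by (simp add: a_def tangency_point_pos)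
  have "1 \<le> C" "16 * R / (\<beta> - 1) < C"
    using assms by (auto simp: C_def)
  then have "0 < w"
    using \<open>0 < a\<close> assms by (simp add: w_def)
  have "C * l / (2 * R) \<le> gap_scale \<beta> a w"
    unfolding w_def using \<open>0 < a\<close> \<open>1 \<le> C\<close> assms by (intro gap_scale_at_tangent_scale) auto
  then have "(\<beta> - 1) * (C * l / (2 * R)) \<le> (\<beta> - 1) * gap_scale \<beta> a w"
    using assms by (intro mult_left_mono) auto
  moreover have "8 * l < (\<beta> - 1) * (C * l / (2 * R))"
  proof -
    have "16 * R * l < C * (\<beta> - 1) * l"
      using \<open>16 * R / (\<beta> - 1) < C\<close> assms by (intro mult_strict_right_mono) (auto simp: field_simps)
    then show ?thesis using assms by (simp add: field_simps)
  qed
  ultimately have "4 * (2 * l) < (\<beta> - 1) * gap_scale \<beta> a w"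
    by linarith
  then have "\<bar>x - a\<bar> < w"
    unfolding a_def using assms \<open>0 < w\<close> by (intro tangent_gap_sublevel_near_tangency) auto
  then show ?thesis by (simp add: w_def C_def)
qed

section \<open>Small angles\<close>

lemma cos_ge_one_minus_half_square: "1 - t^2 / 2 \<le> cos (t::real)"
proof -
  have "sin (t / 2)^2 \<le> (t / 2)^2"
    using abs_sin_x_le_abs_x[of "t / 2"] by (metis abs_ge_zero power2_abs power_mono)
  then show ?thesis
    using cos_double_sin[of "t / 2"] by (simp add: power_divide)
qed

lemma cos_ge_half: "\<bar>t\<bar> \<le> 1 \<Longrightarrow> 1 / 2 \<le> cos (t::real)"
  using cos_ge_one_minus_half_square[of t] power_mono[of "\<bar>t\<bar>" 1 2] by simp

lemma divide_cos_bounds: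
  fixes \<theta> l :: real
  assumes "\<bar>\<theta>\<bar> \<le> 1" "0 \<le> l"
  shows "l \<le> l / cos \<theta>" "l / cos \<theta> \<le> 2 * l"
proof -
  have "1 / 2 \<le> cos \<theta>"
    using cos_ge_half[OF assms(1)] .
  moreover have "l * cos \<theta> \<le> l"
    using \<open>1 / 2 \<le> cos \<theta>\<close> assms by (intro mult_right_le_one_le) auto
  moreover have "l * 1 \<le> l * (2 * cos \<theta>)"
    using \<open>1 / 2 \<le> cos \<theta>\<close> assms by (intro mult_left_mono) auto
  ultimately show "l \<le> l / cos \<theta>" "l / cos \<theta> \<le> 2 * l"
    by (simp_all add: le_divide_eq divide_le_eq)
qed

lemma abs_sin_ge_half:
  assumes "\<bar>t\<bar> \<le> 1"
  shows "\<bar>t\<bar> / 2 \<le> \<bar>sin (t::real)\<bar>"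
proof (cases "t = 0")
  case False
  obtain z where z: "0 < z" "z < \<bar>t\<bar>" "sin \<bar>t\<bar> - sin 0 = (\<bar>t\<bar> - 0) * cos z"
    using MVT2[of 0 "\<bar>t\<bar>" sin cos] False by (auto intro: DERIV_sin)
  have "1 / 2 \<le> cos z" using z assms by (intro cos_ge_half) auto
  then have "\<bar>t\<bar> / 2 \<le> sin \<bar>t\<bar>"
    using z mult_left_mono[of "1 / 2" "cos z" "\<bar>t\<bar>"] by simp
  also have "sin \<bar>t\<bar> \<le> \<bar>sin t\<bar>"
    by (cases "0 \<le> t") auto
  finally show ?thesis .
qed simp

lemma abs_tan_bounds:
  assumes "\<bar>t\<bar> \<le> 1"
  shows "\<bar>t\<bar> / 2 \<le> \<bar>tan (t::real)\<bar>" "\<bar>tan t\<bar> \<le> 2 * \<bar>t\<bar>"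
proof -
  have c: "1 / 2 \<le> cos t" "cos t \<le> 1"
    using cos_ge_half[OF assms] by auto
  have t: "\<bar>tan t\<bar> = \<bar>sin t\<bar> / cos t"
    using c by (simp add: tan_def abs_divide)
  have "\<bar>sin t\<bar> * cos t \<le> \<bar>sin t\<bar>"
    using c by (intro mult_right_le_one_le) auto
  then have "\<bar>sin t\<bar> \<le> \<bar>sin t\<bar> / cos t"
    using c by (simp add: le_divide_eq)
  then show "\<bar>t\<bar> / 2 \<le> \<bar>tan t\<bar>"
    using abs_sin_ge_half[OF assms] t by linarith
  have "\<bar>sin t\<bar> / cos t \<le> \<bar>t\<bar> / (1 / 2)"
    using abs_sin_x_le_abs_x[of t] c by (intro frac_le) auto
  then show "\<bar>tan t\<bar> \<le> 2 * \<bar>t\<bar>"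
    using t by simp
qed

lemma tangency_point_tan_bounds:
  assumes "1 < \<beta>" "\<beta> < 2" "\<bar>\<theta>\<bar> \<le> 1"
  shows "\<bar>\<theta>\<bar> / 4 \<le> tangency_point \<beta> \<bar>tan \<theta>\<bar> powr (\<beta> - 1)"
    "tangency_point \<beta> \<bar>tan \<theta>\<bar> powr (\<beta> - 1) \<le> 2 * \<bar>\<theta>\<bar>"
proof -
  have eq: "tangency_point \<beta> \<bar>tan \<theta>\<bar> powr (\<beta> - 1) = \<bar>tan \<theta>\<bar> / \<beta>"
    using assms by (simp add: tangency_point_powr)
  have "\<bar>tan \<theta>\<bar> / 2 \<le> \<bar>tan \<theta>\<bar> / \<beta>"
    using assms by (intro divide_left_mono) auto
  then show "\<bar>\<theta>\<bar> / 4 \<le> tangency_point \<beta> \<bar>tan \<theta>\<bar> powr (\<beta> - 1)"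
    using abs_tan_bounds(1)[OF assms(3)] unfolding eq by linarith
  have "\<bar>tan \<theta>\<bar> / \<beta> \<le> \<bar>tan \<theta>\<bar> / 1"
    using assms by (intro divide_left_mono) auto
  then show "tangency_point \<beta> \<bar>tan \<theta>\<bar> powr (\<beta> - 1) \<le> 2 * \<bar>\<theta>\<bar>"
    using abs_tan_bounds(2)[OF assms(3)] unfolding eq by linarith
qed

lemma tangent_scale_le_half:
  assumes "1 < \<beta>" "\<beta> < 2" "0 \<le> l" "l \<le> 1 / 4" "0 \<le> \<sigma>" "\<sigma> \<le> 1"
  shows "l powr (1 / 2) * tangency_point \<beta> \<sigma> powr ((2 - \<beta>) / 2) \<le> 1 / 2"
proof -
  have "sqrt (1 / 4) = (1 / 2 :: real)"
    by (rule real_sqrt_unique) (simp_all add: power2_eq_square)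
  moreover have "sqrt l \<le> sqrt (1 / 4)"
    using assms by (intro real_sqrt_le_mono) simp
  moreover have "l powr (1 / 2) = sqrt l"
    using assms by (simp add: powr_half_sqrt)
  ultimately have "l powr (1 / 2) \<le> 1 / 2"
    by linarith
  moreover have "tangency_point \<beta> \<sigma> powr ((2 - \<beta>) / 2) \<le> 1"
    using tangency_point_le[of \<beta> \<sigma>] tangency_point_nonneg[of \<beta> \<sigma>] assms by (intro powr_le1) auto
  ultimately show ?thesis
    using mult_mono[of "l powr (1 / 2)" "1 / 2" "tangency_point \<beta> \<sigma> powr ((2 - \<beta>) / 2)" 1] by simp
qed

lemma level_le_tangency_point_powr:
  assumes "1 < \<beta>" "\<beta> < 2" "0 < l" "l powr ((\<beta> - 1) / \<beta>) \<le> \<bar>\<theta>\<bar>" "\<bar>\<theta>\<bar> \<le> 1"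
  shows "l \<le> (4 powr (\<beta> / (\<beta> - 1) / 2))^2 * tangency_point \<beta> \<bar>tan \<theta>\<bar> powr \<beta>"
proof -
  let ?a = "tangency_point \<beta> \<bar>tan \<theta>\<bar>"
  have "l \<le> (4 * ?a powr (\<beta> - 1)) powr (1 / ((\<beta> - 1) / \<beta>))"
    using tangency_point_tan_bounds(1)[of \<beta> \<theta>] assms by (intro le_powr_inverse) auto
  also have "\<dots> = (4 powr (\<beta> / (\<beta> - 1) / 2))^2 * ?a powr \<beta>"
    using power2_powr_half[of 4 "\<beta> / (\<beta> - 1)"] assms by (simp add: powr_mult powr_powr)
  finally show ?thesis .
qed

lemma tangent_scale_bounds:
  assumes "1 < \<beta>" "\<beta> < 2" "\<bar>\<theta>\<bar> \<le> 1"
  defines "g \<equiv> (2 - \<beta>) / (2 * (\<beta> - 1))" and "a \<equiv> tangency_point \<beta> \<bar>tan \<theta>\<bar>"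
  shows "\<bar>\<theta>\<bar> powr g / 4 powr g \<le> a powr ((2 - \<beta>) / 2)"
    and "a powr ((2 - \<beta>) / 2) \<le> 2 powr g * \<bar>\<theta>\<bar> powr g"
proof -
  have "0 \<le> g" using assms by (simp add: g_def)
  have "(\<beta> - 1) * g = (2 - \<beta>) / 2"
    using assms by (simp add: g_def field_simps)
  then have eq: "a powr ((2 - \<beta>) / 2) = (a powr (\<beta> - 1)) powr g"
    by (simp only: powr_powr)
  have "(\<bar>\<theta>\<bar> / 4) powr g \<le> (a powr (\<beta> - 1)) powr g"
    using tangency_point_tan_bounds(1)[OF assms(1-3)] \<open>0 \<le> g\<close> by (intro powr_mono2) (auto simp: a_def)
  then show "\<bar>\<theta>\<bar> powr g / 4 powr g \<le> a powr ((2 - \<beta>) / 2)"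
    unfolding eq by (simp add: powr_divide)
  have "(a powr (\<beta> - 1)) powr g \<le> (2 * \<bar>\<theta>\<bar>) powr g"
    using tangency_point_tan_bounds(2)[OF assms(1-3)] \<open>0 \<le> g\<close> by (intro powr_mono2) (auto simp: a_def)
  then show "a powr ((2 - \<beta>) / 2) \<le> 2 powr g * \<bar>\<theta>\<bar> powr g"
    unfolding eq by (simp add: powr_mult)
qed

section \<open>Chords of convex bodies bounded near the origin by \<open>y = \<bar>x\<bar> powr \<beta>\<close>\<close>

lemma inner_udir_plus_pi_half:
  assumes "cos t \<noteq> 0"
  shows "p \<bullet> udir (t + pi / 2) = cos t * (snd p - tan t * fst p)"
proof -
  have "cos (t + pi / 2) = - sin t" "sin (t + pi / 2) = cos t"
    by (simp_all add: cos_add sin_add)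
  then show ?thesis
    using assms by (cases p) (simp add: udir_def tan_def field_simps)
qed

lemma chord_eq_level_set:
  assumes "0 < cos \<theta>" "q \<in> C" "snd q - tan \<theta> * fst q = m"
    and "\<And>p. p \<in> C \<Longrightarrow> m \<le> snd p - tan \<theta> * fst p"
  shows "chord C (\<theta> + pi / 2) l = {p \<in> C. snd p - tan \<theta> * fst p = m + l / cos \<theta>}"
proof -
  have inner: "p \<bullet> udir (\<theta> + pi / 2) = cos \<theta> * (snd p - tan \<theta> * fst p)" for p
    using assms(1) by (simp add: inner_udir_plus_pi_half)
  have inf: "(INF p\<in>C. cos \<theta> * (snd p - tan \<theta> * fst p)) = cos \<theta> * m"
    using assms by (intro cInf_eq_minimum) (auto intro: mult_left_mono)
  show ?thesis
    unfolding chord_def inner inf using assms(1) by (auto simp: field_simps)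
qed

lemma diameter_le_on_line:
  fixes S :: "(real \<times> real) set"
  assumes "\<bar>s\<bar> \<le> 1" "0 \<le> W"
    and "\<And>p. p \<in> S \<Longrightarrow> snd p = s * fst p + c \<and> \<bar>fst p - x\<^sub>0\<bar> \<le> W"
  shows "diameter S \<le> 4 * W"
proof (rule diameter_le)
  fix p q assume "p \<in> S" "q \<in> S"
  then have "\<bar>fst p - fst q\<bar> \<le> 2 * W" "snd p - snd q = s * (fst p - fst q)"
    using assms(3)[of p] assms(3)[of q] by (auto simp: algebra_simps)
  moreover have "\<bar>s * (fst p - fst q)\<bar> \<le> \<bar>fst p - fst q\<bar>"
    using assms(1) by (simp add: abs_mult mult_left_le_one_le)
  moreover have "norm (p - q) \<le> \<bar>fst p - fst q\<bar> + \<bar>snd p - snd q\<bar>"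
    using norm_Pair_le[of "fst p - fst q" "snd p - snd q"] by (cases p, cases q) simp
  ultimately show "norm (p - q) \<le> 4 * W" by linarith
qed (use assms in simp)

lemma convex_Pair_combination:
  fixes S :: "(real \<times> real) set"
  assumes "convex S" "p \<in> S" "q \<in> S" "0 \<le> t" "t \<le> 1"
  shows "(fst q + t * (fst p - fst q), snd q + t * (snd p - snd q)) \<in> S"
proof -
  have "(1 - t) *\<^sub>R q + t *\<^sub>R p \<in> S"
    using assms by (intro convexD) auto
  then show ?thesis
    by (cases p, cases q) (simp add: algebra_simps)
qed

locale graph_body =
  fixes \<beta> :: real and A :: "(real \<times> real) set"
  assumes exponent_pos: "0 < \<beta>" and body: "convex_body A" and graph: "boundary_graph \<beta> A"
begin

lemma body_convex: "convex A"
  using body by (simp add: convex_body_def)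

lemma graph_mem_frontier:
  assumes "\<bar>x\<bar> \<le> 1"
  shows "(x, \<bar>x\<bar> powr \<beta>) \<in> frontier A"
proof -
  have "(x, \<bar>x\<bar> powr \<beta>) \<in> {(x, \<bar>x\<bar> powr \<beta>) | x. -1 \<le> x \<and> x \<le> 1}"
    using assms by auto
  then show ?thesis
    using graph unfolding boundary_graph_def by blast
qed

lemma graph_mem:
  assumes "\<bar>x\<bar> \<le> 1"
  shows "(x, \<bar>x\<bar> powr \<beta>) \<in> A"
proof -
  have "closed A"
    using body by (simp add: convex_body_def compact_imp_closed)
  then show ?thesis
    using graph_mem_frontier[OF assms] frontier_subset_closed by blast
qed

lemma mem_if_above_graph:
  assumes "\<bar>x\<bar> \<le> 1" "\<bar>x\<bar> powr \<beta> \<le> y" "y \<le> 1"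
  shows "(x, y) \<in> A"
proof -
  have "(x, 1) \<in> A"
    using convex_Pair_combination[OF body_convex graph_mem[of 1] graph_mem[of "-1"], of "(x + 1) / 2"]
      assms(1) by (simp add: field_simps)
  show ?thesis
  proof (cases "\<bar>x\<bar> powr \<beta> = 1")
    case True
    then show ?thesis using \<open>(x, 1) \<in> A\<close> assms by simp
  next
    case False
    define t where "t = (y - \<bar>x\<bar> powr \<beta>) / (1 - \<bar>x\<bar> powr \<beta>)"
    have "0 \<le> t" "t \<le> 1" and y: "\<bar>x\<bar> powr \<beta> + t * (1 - \<bar>x\<bar> powr \<beta>) = y"
      using False assms by (auto simp: t_def field_simps)
    have "(x, \<bar>x\<bar> powr \<beta> + t * (1 - \<bar>x\<bar> powr \<beta>)) \<in> A"
      using convex_Pair_combination[OF body_convex \<open>(x, 1) \<in> A\<close> graph_mem[OF assms(1)] \<open>0 \<le> t\<close> \<open>t \<le> 1\<close>]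
      by simp
    then show ?thesis
      unfolding y .
  qed
qed

lemma interior_if_above_graph:
  assumes "\<bar>x\<bar> < 1" "\<bar>x\<bar> powr \<beta> < y" "y < 1"
  shows "(x, y) \<in> interior A"
proof -
  let ?U = "{p. \<bar>fst p\<bar> < 1} \<inter> {p. \<bar>fst p\<bar> powr \<beta> < snd p} \<inter> {p :: real \<times> real. snd p < 1}"
  have "open ?U"
    using exponent_pos
    by (intro open_Int open_Collect_less continuous_on_powr' continuous_intros) auto
  moreover have "?U \<subseteq> A"
    using mem_if_above_graph by (auto simp: less_imp_le)
  ultimately show ?thesis
    using assms interior_maximal[of ?U A] by auto
qed

lemma above_graph_if_mem:
  assumes "(x, y) \<in> A" "\<bar>x\<bar> < 1"
  shows "\<bar>x\<bar> powr \<beta> \<le> y"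
proof (rule ccontr)
  define h where "h = \<bar>x\<bar> powr \<beta>"
  assume "\<not> \<bar>x\<bar> powr \<beta> \<le> y"
  then have "y < h" by (simp add: h_def)
  have "h < 1"
    using powr_less_mono2[OF exponent_pos _ assms(2)] by (simp add: h_def)
  define c where "c = (x, (h + 1) / 2)"
  have "c \<in> interior A"
    using interior_if_above_graph[OF assms(2)] \<open>h < 1\<close> by (simp add: c_def h_def)
  define e where "e = (h - y) / ((h + 1) / 2 - y)"
  have "0 < e" "e \<le> 1"
    using \<open>y < h\<close> \<open>h < 1\<close> by (auto simp: e_def field_simps)
  have "(x, y) - e *\<^sub>R ((x, y) - c) = (x, h)"
    using \<open>y < h\<close> \<open>h < 1\<close> by (simp add: c_def e_def field_simps)
  then have "(x, h) \<in> interior A"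
    using mem_interior_convex_shrink[OF body_convex \<open>c \<in> interior A\<close> assms(1) \<open>0 < e\<close> \<open>e \<le> 1\<close>] by simp
  moreover have "(x, h) \<in> frontier A"
    using graph_mem_frontier assms(2) by (simp add: h_def)
  ultimately show False
    by (simp add: frontier_def)
qed

text \<open>Between a point near the axis that lies below the level \<open>0\<close> of \<open>y - s x\<close> and a point
  \<open>p\<close> with \<open>\<bar>fst p\<bar> \<ge> 1/2\<close>, the segment crosses a vertical line \<open>x = \<plusminus>1/2\<close>, where the
  graph already lies at level at least \<open>1/4 - 1/20\<close>.\<close>
lemma level_gain_off_axis:
  assumes "\<beta> \<le> 2" "\<bar>s\<bar> \<le> 1 / 10"
    and "q \<in> A" "\<bar>fst q\<bar> < 1 / 2" "snd q - s * fst q \<le> 0"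
    and "p \<in> A" "1 / 2 \<le> \<bar>fst p\<bar>"
  shows "snd q - s * fst q + 1 / 5 \<le> snd p - s * fst p"
proof -
  define v where "v r = snd r - s * fst r" for r :: "real \<times> real"
  define x where "x = (if 0 \<le> fst p then 1 / 2 else - 1 / 2 :: real)"
  define t where "t = (x - fst q) / (fst p - fst q)"
  have "fst p \<noteq> fst q" using assms by auto
  have "0 < t" "t \<le> 1"
    using assms by (auto simp: t_def x_def field_simps abs_if split: if_splits)
  have "fst q + t * (fst p - fst q) = x"
    using \<open>fst p \<noteq> fst q\<close> by (simp add: t_def)
  then have r: "(x, snd q + t * (snd p - snd q)) \<in> A"
    using convex_Pair_combination[OF body_convex \<open>p \<in> A\<close> \<open>q \<in> A\<close> less_imp_le[OF \<open>0 < t\<close>] \<open>t \<le> 1\<close>]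
    by simp
  have "1 / 4 \<le> \<bar>x\<bar> powr \<beta>"
    using powr_mono'[of \<beta> 2 "1 / 2"] assms(1) by (simp add: x_def power2_eq_square)
  also have "\<dots> \<le> snd q + t * (snd p - snd q)"
    using above_graph_if_mem[OF r] by (simp add: x_def)
  moreover have "\<bar>s * x\<bar> \<le> 1 / 20"
    using assms(2) by (simp add: x_def abs_mult)
  moreover have "(1 - t) * v q + t * v p = snd q + t * (snd p - snd q) - s * x"
    unfolding \<open>fst q + t * (fst p - fst q) = x\<close>[symmetric] by (simp add: v_def algebra_simps)
  ultimately have "1 / 5 \<le> v q + t * (v p - v q)"
    by (simp add: algebra_simps abs_le_iff)
  then have "t * (1 / 5) \<le> t * (v p - v q)"
    using \<open>t \<le> 1\<close> assms(5) by (simp add: v_def)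
  then show ?thesis
    using \<open>0 < t\<close> by (simp add: v_def)
qed

lemma tangent_contact_mem:
  assumes "1 < \<beta>" "\<beta> < 2" "\<bar>s\<bar> \<le> 1"
  shows "(tangency_abscissa \<beta> s, s * tangency_abscissa \<beta> s + tangent_intercept \<beta> s) \<in> A"
    and "\<bar>tangency_abscissa \<beta> s\<bar> \<le> \<bar>s\<bar>"
proof -
  have "\<bar>tangency_abscissa \<beta> s\<bar> = tangency_point \<beta> \<bar>s\<bar>"
    by (simp add: tangency_abscissa_def tangency_point_nonneg)
  then show "\<bar>tangency_abscissa \<beta> s\<bar> \<le> \<bar>s\<bar>"
    using tangency_point_le[of \<beta> "\<bar>s\<bar>"] assms by simp
  moreover have "s * tangency_abscissa \<beta> s + tangent_intercept \<beta> s = \<bar>tangency_abscissa \<beta> s\<bar> powr \<beta>"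
    using tangent_gap_tangency_abscissa[OF assms(1,2), of s] by (simp add: tangent_gap_def)
  ultimately show "(tangency_abscissa \<beta> s, s * tangency_abscissa \<beta> s + tangent_intercept \<beta> s) \<in> A"
    using graph_mem[of "tangency_abscissa \<beta> s"] assms by simp
qed

lemma tangent_line_supports:
  assumes "1 < \<beta>" "\<beta> < 2" "\<bar>s\<bar> \<le> 1 / 10" "p \<in> A"
  shows "tangent_intercept \<beta> s \<le> snd p - s * fst p"
    and "snd p - s * fst p < tangent_intercept \<beta> s + 1 / 5 \<Longrightarrow>
      \<bar>fst p\<bar> < 1 / 2 \<and> tangent_gap \<beta> s (fst p) \<le> snd p - s * fst p - tangent_intercept \<beta> s"
proof -
  let ?c = "tangent_intercept \<beta> s"
  have "?c \<le> 0"
    using assms by (simp add: tangent_intercept_def mult_nonpos_nonneg)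
  have "?c \<le> snd p - s * fst p \<and> (snd p - s * fst p < ?c + 1 / 5 \<longrightarrow>
      \<bar>fst p\<bar> < 1 / 2 \<and> tangent_gap \<beta> s (fst p) \<le> snd p - s * fst p - ?c)"
  proof (cases "\<bar>fst p\<bar> < 1 / 2")
    case True
    then have "\<bar>fst p\<bar> powr \<beta> \<le> snd p"
      using above_graph_if_mem[of "fst p" "snd p"] assms by simp
    then have "tangent_gap \<beta> s (fst p) \<le> snd p - s * fst p - ?c"
      by (simp add: tangent_gap_def)
    then show ?thesis
      using True tangent_gap_nonneg[OF assms(1,2), of s "fst p"] by simp
  next
    case False
    let ?x\<^sub>0 = "tangency_abscissa \<beta> s"
    have "(?x\<^sub>0, s * ?x\<^sub>0 + ?c) \<in> A" "\<bar>?x\<^sub>0\<bar> \<le> \<bar>s\<bar>"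
      using tangent_contact_mem[of s] assms by auto
    then have "?c + 1 / 5 \<le> snd p - s * fst p"
      using level_gain_off_axis[of s "(?x\<^sub>0, s * ?x\<^sub>0 + ?c)" p] \<open>?c \<le> 0\<close> False assms by simp
    then show ?thesis by simp
  qed
  then show "?c \<le> snd p - s * fst p"
    and "snd p - s * fst p < ?c + 1 / 5 \<Longrightarrow>
      \<bar>fst p\<bar> < 1 / 2 \<and> tangent_gap \<beta> s (fst p) \<le> snd p - s * fst p - ?c"
    by auto
qed

lemma mem_tangent_level:
  assumes "1 < \<beta>" "\<beta> < 2" "\<bar>x\<bar> \<le> 1 / 2" "tangent_gap \<beta> s x \<le> \<mu>" "\<mu> \<le> 1 / 2"
  shows "(x, s * x + tangent_intercept \<beta> s + \<mu>) \<in> A"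
proof (rule mem_if_above_graph)
  have "\<bar>x\<bar> powr \<beta> \<le> \<bar>x\<bar> powr 1"
    using assms by (intro powr_mono') auto
  then show "s * x + tangent_intercept \<beta> s + \<mu> \<le> 1"
    using assms tangent_gap_nonneg[OF assms(1,2), of s x] by (simp add: tangent_gap_def)
qed (use assms in \<open>auto simp: tangent_gap_def\<close>)

lemma chord_eq_tangent_level:
  assumes "1 < \<beta>" "\<beta> < 2" "\<bar>\<theta>\<bar> \<le> 1 / 20"
  shows "chord A (\<theta> + pi / 2) l =
    {p \<in> A. snd p - tan \<theta> * fst p = tangent_intercept \<beta> (tan \<theta>) + l / cos \<theta>}"
proof -
  let ?s = "tan \<theta>" and ?c = "tangent_intercept \<beta> (tan \<theta>)"
  let ?x\<^sub>0 = "tangency_abscissa \<beta> (tan \<theta>)"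
  have "\<bar>?s\<bar> \<le> 1 / 10"
    using abs_tan_bounds(2)[of \<theta>] assms by simp
  have "(?x\<^sub>0, ?s * ?x\<^sub>0 + ?c) \<in> A"
    using tangent_contact_mem[of ?s] \<open>\<bar>?s\<bar> \<le> 1 / 10\<close> assms by simp
  moreover have "0 < cos \<theta>"
    using cos_ge_half[of \<theta>] assms by simp
  ultimately show ?thesis
    using tangent_line_supports(1)[of ?s] \<open>\<bar>?s\<bar> \<le> 1 / 10\<close> assms
    by (intro chord_eq_level_set[where q = "(?x\<^sub>0, ?s * ?x\<^sub>0 + ?c)"]) auto
qed

lemma chord_len_ge:
  assumes "1 < \<beta>" "\<beta> < 2" "\<bar>\<theta>\<bar> \<le> 1 / 20" "0 < l" "l \<le> 1 / 20" "0 \<le> w" "w \<le> 1 / 4"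
    and "tangent_gap \<beta> \<bar>tan \<theta>\<bar> (tangency_point \<beta> \<bar>tan \<theta>\<bar> + w) \<le> l / cos \<theta>"
  shows "w \<le> chord_len A (\<theta> + pi / 2) l"
proof -
  let ?s = "tan \<theta>" and ?c = "tangent_intercept \<beta> (tan \<theta>)" and ?\<mu> = "l / cos \<theta>"
  let ?a = "tangency_point \<beta> \<bar>tan \<theta>\<bar>"
  define e where "e = (if ?s < 0 then - 1 else 1 :: real)"
  define P where "P u = (e * u, ?s * (e * u) + ?c + ?\<mu>)" for u
  have "\<bar>?s\<bar> \<le> 1 / 10" "?\<mu> \<le> 1 / 2"
    using abs_tan_bounds(2)[of \<theta>] divide_cos_bounds(2)[of \<theta> l] assms by auto
  have "0 \<le> ?a" "?a \<le> 1 / 10"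
    using tangency_point_le[of \<beta> "\<bar>?s\<bar>"] tangency_point_nonneg \<open>\<bar>?s\<bar> \<le> 1 / 10\<close> assms by auto
  have "tangent_gap \<beta> \<bar>?s\<bar> ?a \<le> ?\<mu>"
    using tangent_gap_tangency_point[of \<beta> "\<bar>?s\<bar>"] tangent_gap_nonneg[of \<beta> "\<bar>?s\<bar>"] assms
    by (metis abs_ge_zero order_trans)
  have P: "P u \<in> chord A (\<theta> + pi / 2) l"
    if "0 \<le> u" "u \<le> 1 / 2" "tangent_gap \<beta> \<bar>?s\<bar> u \<le> ?\<mu>" for u
  proof -
    have "tangent_gap \<beta> ?s (e * u) \<le> ?\<mu>" "\<bar>e * u\<bar> \<le> 1 / 2"
      using that tangent_gap_abs_slope[of \<beta> ?s u] by (auto simp: e_def)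
    then have "P u \<in> A"
      unfolding P_def using mem_tangent_level \<open>?\<mu> \<le> 1 / 2\<close> assms by blast
    then show ?thesis
      using chord_eq_tangent_level assms by (simp add: P_def)
  qed
  have "bounded A"
    using body by (simp add: convex_body_def compact_imp_bounded)
  then have "bounded (chord A (\<theta> + pi / 2) l)"
    by (rule bounded_subset) (auto simp: chord_def)
  then have "dist (P (?a + w)) (P ?a) \<le> chord_len A (\<theta> + pi / 2) l"
    unfolding chord_len_def using assms \<open>0 \<le> ?a\<close> \<open>?a \<le> 1 / 10\<close> \<open>tangent_gap \<beta> \<bar>?s\<bar> ?a \<le> ?\<mu>\<close>
    by (intro diameter_bounded_bound P) auto
  moreover have "dist (fst (P (?a + w))) (fst (P ?a)) \<le> dist (P (?a + w)) (P ?a)"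
    by (rule dist_fst_le)
  moreover have "dist (fst (P (?a + w))) (fst (P ?a)) = w"
    using assms by (simp add: P_def e_def dist_real_def)
  ultimately show ?thesis by linarith
qed

lemma chord_len_le:
  assumes "1 < \<beta>" "\<beta> < 2" "\<bar>\<theta>\<bar> \<le> 1 / 20" "0 < l" "l \<le> 1 / 20" "0 \<le> W"
    and "\<And>x. tangent_gap \<beta> \<bar>tan \<theta>\<bar> x \<le> l / cos \<theta> \<Longrightarrow> \<bar>x - tangency_point \<beta> \<bar>tan \<theta>\<bar>\<bar> \<le> W"
  shows "chord_len A (\<theta> + pi / 2) l \<le> 4 * W"
proof -
  let ?s = "tan \<theta>" and ?c = "tangent_intercept \<beta> (tan \<theta>)" and ?\<mu> = "l / cos \<theta>"
  let ?a = "tangency_point \<beta> \<bar>tan \<theta>\<bar>"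
  define e where "e = (if ?s < 0 then - 1 else 1 :: real)"
  have "\<bar>?s\<bar> \<le> 1 / 10" "?\<mu> < 1 / 5"
    using abs_tan_bounds(2)[of \<theta>] divide_cos_bounds(2)[of \<theta> l] assms by auto
  have "snd p = ?s * fst p + (?c + ?\<mu>) \<and> \<bar>fst p - e * ?a\<bar> \<le> W"
    if "p \<in> chord A (\<theta> + pi / 2) l" for p
  proof -
    have "p \<in> A" "snd p - ?s * fst p = ?c + ?\<mu>"
      using that chord_eq_tangent_level assms by auto
    then have "tangent_gap \<beta> ?s (fst p) \<le> ?\<mu>"
      using tangent_line_supports(2)[of ?s p] \<open>?\<mu> < 1 / 5\<close> \<open>\<bar>?s\<bar> \<le> 1 / 10\<close> assms by simp
    then have "tangent_gap \<beta> \<bar>?s\<bar> (e * fst p) \<le> ?\<mu>"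
      using tangent_gap_abs_slope[of \<beta> ?s "e * fst p"] by (simp add: e_def)
    then have "\<bar>e * fst p - ?a\<bar> \<le> W"
      using assms(7) by blast
    moreover have "\<bar>e * fst p - ?a\<bar> = \<bar>fst p - e * ?a\<bar>"
      by (simp add: e_def abs_minus_commute add.commute)
    ultimately show ?thesis
      using \<open>snd p - ?s * fst p = ?c + ?\<mu>\<close> by simp
  qed
  then show ?thesis
    unfolding chord_len_def using \<open>\<bar>?s\<bar> \<le> 1 / 10\<close> assms
    by (intro diameter_le_on_line[of ?s W _ "?c + ?\<mu>" "e * ?a"]) auto
qed

lemma chord_len_vertex_regime:
  assumes "1 < \<beta>" "\<beta> < 2" "0 < l" "\<bar>\<theta>\<bar> < l powr ((\<beta> - 1) / \<beta>)" "l powr ((\<beta> - 1) / \<beta>) < 1 / 100"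
  shows "l powr (1 / \<beta>) / 4 \<le> chord_len A (\<theta> + pi / 2) l"
    and "chord_len A (\<theta> + pi / 2) l \<le> 4 * (2 powr (1 / (\<beta> - 1)) + 16 / (\<beta> - 1) + 1) * l powr (1 / \<beta>)"
proof -
  let ?a = "tangency_point \<beta> \<bar>tan \<theta>\<bar>" and ?T = "l powr (1 / \<beta>)"
  have "l < 1 / 100"
    using less_if_powr_less[of "(\<beta> - 1) / \<beta>" l "1 / 100"] assms by simp
  have "\<bar>\<theta>\<bar> < 1 / 100"
    using assms by linarith
  then have \<mu>: "l \<le> l / cos \<theta>" "l / cos \<theta> \<le> 2 * l"
    using divide_cos_bounds[of \<theta> l] assms by auto
  have "?T \<le> 1"
    using \<open>l < 1 / 100\<close> assms by (intro powr_le1) auto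
  then show "?T / 4 \<le> chord_len A (\<theta> + pi / 2) l"
    using tangent_gap_le_at_vertex_scale[of \<beta> "\<bar>tan \<theta>\<bar>" l] \<mu> \<open>\<bar>\<theta>\<bar> < 1 / 100\<close> \<open>l < 1 / 100\<close> assms
    by (intro chord_len_ge) auto
  have "?a powr (\<beta> - 1) \<le> 2 * l powr ((\<beta> - 1) / \<beta>)"
    using tangency_point_tan_bounds(2)[of \<beta> \<theta>] \<open>\<bar>\<theta>\<bar> < 1 / 100\<close> assms by simp
  then have "?a \<le> (2 * l powr ((\<beta> - 1) / \<beta>)) powr (1 / (\<beta> - 1))"
    using assms by (intro le_powr_inverse tangency_point_nonneg) auto
  also have "\<dots> = 2 powr (1 / (\<beta> - 1)) * ?T"
    using assms by (simp add: powr_mult powr_powr)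
  finally have "?a \<le> 2 powr (1 / (\<beta> - 1)) * ?T" .
  then have "chord_len A (\<theta> + pi / 2) l \<le> 4 * ((2 powr (1 / (\<beta> - 1)) + 16 / (\<beta> - 1) + 1) * ?T)"
    using tangent_gap_sublevel_vertex_scale[of \<beta> "\<bar>tan \<theta>\<bar>" l "2 powr (1 / (\<beta> - 1))"]
      \<mu> \<open>\<bar>\<theta>\<bar> < 1 / 100\<close> \<open>l < 1 / 100\<close> assms
    by (intro chord_len_le) (auto intro: less_imp_le)
  then show "chord_len A (\<theta> + pi / 2) l \<le> 4 * (2 powr (1 / (\<beta> - 1)) + 16 / (\<beta> - 1) + 1) * ?T"
    by (simp only: mult.assoc)
qed

lemma chord_len_tangent_regime:
  assumes "1 < \<beta>" "\<beta> < 2" "0 < l" "l powr ((\<beta> - 1) / \<beta>) \<le> \<bar>\<theta>\<bar>" "\<bar>\<theta>\<bar> < 1 / 100"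
  defines "g \<equiv> (2 - \<beta>) / (2 * (\<beta> - 1))"
  shows "l powr (1 / 2) * \<bar>\<theta>\<bar> powr g / (2 * 4 powr g) \<le> chord_len A (\<theta> + pi / 2) l"
    and "chord_len A (\<theta> + pi / 2) l
      \<le> 4 * (1 + 16 * 4 powr (\<beta> / (\<beta> - 1) / 2) / (\<beta> - 1)) * 2 powr g * (l powr (1 / 2) * \<bar>\<theta>\<bar> powr g)"
proof -
  let ?\<sigma> = "\<bar>tan \<theta>\<bar>" and ?a = "tangency_point \<beta> \<bar>tan \<theta>\<bar>"
  define T where "T = l powr (1 / 2) * ?a powr ((2 - \<beta>) / 2)"
  define R where "R = 4 powr (\<beta> / (\<beta> - 1) / 2)"
  have "l < 1 / 100"
    using less_if_powr_less[of "(\<beta> - 1) / \<beta>" l "1 / 100"] assms by simp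
  have \<mu>: "l \<le> l / cos \<theta>" "l / cos \<theta> \<le> 2 * l"
    using divide_cos_bounds[of \<theta> l] assms by auto
  have "0 < l powr ((\<beta> - 1) / \<beta>)"
    using assms by simp
  then have "0 < ?\<sigma>" "?\<sigma> \<le> 1"
    using abs_tan_bounds[of \<theta>] assms by auto
  then have "T \<le> 1 / 2"
    unfolding T_def using \<open>l < 1 / 100\<close> assms by (intro tangent_scale_le_half) auto
  then have "T / 2 \<le> chord_len A (\<theta> + pi / 2) l"
    using tangent_gap_le_at_tangent_scale[of \<beta> ?\<sigma> l] \<mu> \<open>0 < ?\<sigma>\<close> \<open>l < 1 / 100\<close> assms
    by (intro chord_len_ge) (auto simp: T_def)
  moreover have "l powr (1 / 2) * (\<bar>\<theta>\<bar> powr g / 4 powr g) \<le> T"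
    unfolding T_def g_def using tangent_scale_bounds(1)[of \<beta> \<theta>] assms
    by (intro mult_left_mono) auto
  ultimately show "l powr (1 / 2) * \<bar>\<theta>\<bar> powr g / (2 * 4 powr g) \<le> chord_len A (\<theta> + pi / 2) l"
    by simp
  have "1 \<le> R"
    using assms by (simp add: R_def ge_one_powr_ge_zero)
  have "chord_len A (\<theta> + pi / 2) l \<le> 4 * ((1 + 16 * R / (\<beta> - 1)) * T)"
    using tangent_gap_sublevel_tangent_scale[of \<beta> ?\<sigma> l R] level_le_tangency_point_powr[of \<beta> l \<theta>]
      \<mu> \<open>0 < ?\<sigma>\<close> \<open>1 \<le> R\<close> \<open>l < 1 / 100\<close> assms
    by (intro chord_len_le) (auto simp: T_def R_def intro: less_imp_le)
  also have "\<dots> \<le> 4 * ((1 + 16 * R / (\<beta> - 1)) * (2 powr g * (l powr (1 / 2) * \<bar>\<theta>\<bar> powr g)))"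
    unfolding T_def g_def using tangent_scale_bounds(2)[of \<beta> \<theta>] \<open>1 \<le> R\<close> assms
    by (intro mult_left_mono) (auto simp: mult.left_commute)
  finally show "chord_len A (\<theta> + pi / 2) l
      \<le> 4 * (1 + 16 * 4 powr (\<beta> / (\<beta> - 1) / 2) / (\<beta> - 1)) * 2 powr g * (l powr (1 / 2) * \<bar>\<theta>\<bar> powr g)"
    by (simp only: R_def mult.assoc)
qed

end

text \<open>The constants of \<open>chord_len_vertex_regime\<close> and \<open>chord_len_tangent_regime\<close>, combined.\<close>

definition chord_lower_const :: "real \<Rightarrow> real" where
  "chord_lower_const \<beta> = min (1 / 4) (1 / (2 * 4 powr ((2 - \<beta>) / (2 * (\<beta> - 1)))))"

definition chord_upper_const :: "real \<Rightarrow> real" where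
  "chord_upper_const \<beta> = max (4 * (2 powr (1 / (\<beta> - 1)) + 16 / (\<beta> - 1) + 1))
     (4 * (1 + 16 * 4 powr (\<beta> / (\<beta> - 1) / 2) / (\<beta> - 1)) * 2 powr ((2 - \<beta>) / (2 * (\<beta> - 1))))"

lemma chord_lower_const_pos: "0 < chord_lower_const \<beta>"
  by (simp add: chord_lower_const_def)

lemma chord_upper_const_pos: "1 < \<beta> \<Longrightarrow> 0 < chord_upper_const \<beta>"
  by (simp add: chord_upper_const_def less_max_iff_disj add_pos_nonneg)

context graph_body
begin

lemma chord_len_estimates:
  fixes \<theta> l :: real
  assumes "1 < \<beta>" "\<beta> < 2" "0 < l"
  defines "X \<equiv> l powr (1 / 2) * \<bar>\<theta>\<bar> powr ((2 - \<beta>) / (2 * (\<beta> - 1)))"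
  shows "\<bar>\<theta>\<bar> < l powr ((\<beta> - 1) / \<beta>) \<Longrightarrow> l powr ((\<beta> - 1) / \<beta>) < 1 / 100 \<Longrightarrow>
      chord_lower_const \<beta> * l powr (1 / \<beta>) \<le> chord_len A (\<theta> + pi / 2) l \<and>
      chord_len A (\<theta> + pi / 2) l \<le> chord_upper_const \<beta> * l powr (1 / \<beta>)"
    and "l powr ((\<beta> - 1) / \<beta>) \<le> \<bar>\<theta>\<bar> \<Longrightarrow> \<bar>\<theta>\<bar> < 1 / 100 \<Longrightarrow>
      chord_lower_const \<beta> * X \<le> chord_len A (\<theta> + pi / 2) l \<and>
      chord_len A (\<theta> + pi / 2) l \<le> chord_upper_const \<beta> * X"
proof -
  define g where "g = (2 - \<beta>) / (2 * (\<beta> - 1))"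
  define C\<^sub>1 where "C\<^sub>1 = 4 * (2 powr (1 / (\<beta> - 1)) + 16 / (\<beta> - 1) + 1)"
  define C\<^sub>2 where "C\<^sub>2 = 4 * (1 + 16 * 4 powr (\<beta> / (\<beta> - 1) / 2) / (\<beta> - 1)) * 2 powr g"
  have "0 \<le> l powr (1 / \<beta>)" "0 \<le> X"
    by (simp_all add: X_def)
  have lower: "chord_lower_const \<beta> * x \<le> x / 4" "chord_lower_const \<beta> * x \<le> x / (2 * 4 powr g)"
    if "0 \<le> x" for x
    using that mult_right_mono[of "chord_lower_const \<beta>" "1 / 4" x]
      mult_right_mono[of "chord_lower_const \<beta>" "1 / (2 * 4 powr g)" x]
    by (simp_all add: chord_lower_const_def g_def)
  have upper: "C\<^sub>1 * x \<le> chord_upper_const \<beta> * x" "C\<^sub>2 * x \<le> chord_upper_const \<beta> * x"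
    if "0 \<le> x" for x
    using that mult_right_mono[of C\<^sub>1 "chord_upper_const \<beta>" x] mult_right_mono[of C\<^sub>2 "chord_upper_const \<beta>" x]
    by (simp_all add: chord_upper_const_def C\<^sub>1_def C\<^sub>2_def g_def)
  let ?T = "l powr (1 / \<beta>)"
  show "chord_lower_const \<beta> * ?T \<le> chord_len A (\<theta> + pi / 2) l \<and>
      chord_len A (\<theta> + pi / 2) l \<le> chord_upper_const \<beta> * ?T"
    if "\<bar>\<theta>\<bar> < l powr ((\<beta> - 1) / \<beta>)" "l powr ((\<beta> - 1) / \<beta>) < 1 / 100"
  proof -
    have "?T / 4 \<le> chord_len A (\<theta> + pi / 2) l" "chord_len A (\<theta> + pi / 2) l \<le> C\<^sub>1 * ?T"
      using chord_len_vertex_regime[OF assms(1-3) that] by (simp_all add: C\<^sub>1_def)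
    then show ?thesis
      using lower(1)[of ?T] upper(1)[of ?T] \<open>0 \<le> ?T\<close> by linarith
  qed
  show "chord_lower_const \<beta> * X \<le> chord_len A (\<theta> + pi / 2) l \<and>
      chord_len A (\<theta> + pi / 2) l \<le> chord_upper_const \<beta> * X"
    if "l powr ((\<beta> - 1) / \<beta>) \<le> \<bar>\<theta>\<bar>" "\<bar>\<theta>\<bar> < 1 / 100"
  proof -
    have "X / (2 * 4 powr g) \<le> chord_len A (\<theta> + pi / 2) l" "chord_len A (\<theta> + pi / 2) l \<le> C\<^sub>2 * X"
      using chord_len_tangent_regime[OF assms(1-3) that] by (simp_all add: C\<^sub>2_def g_def X_def)
    then show ?thesis
      using lower(2)[of X] upper(2)[of X] \<open>0 \<le> X\<close> by linarith
  qed
qed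

end

theorem proposition3p3:
  "\<exists>c>0. \<forall>\<beta>::real. 1 < \<beta> \<and> \<beta> < 2 \<longrightarrow>
     (\<exists>c1>0. \<exists>c2>0. \<forall>A. convex_body A \<and> has_centre_of_symmetry A \<and> y_axis_symmetric A
         \<and> boundary_graph \<beta> A \<longrightarrow>
       (\<forall>\<theta> l::real. l > 0 \<longrightarrow>
          ((\<bar>\<theta>\<bar> < l powr ((\<beta> - 1) / \<beta>) \<and> l powr ((\<beta> - 1) / \<beta>) < c \<longrightarrow>
              c1 * l powr (1 / \<beta>) \<le> chord_len A (\<theta> + pi / 2) l \<and>
              chord_len A (\<theta> + pi / 2) l \<le> c2 * l powr (1 / \<beta>))
         \<and> (l powr ((\<beta> - 1) / \<beta>) \<le> \<bar>\<theta>\<bar> \<and> \<bar>\<theta>\<bar> < c \<longrightarrow>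
              c1 * (l powr (1/2) * \<bar>\<theta>\<bar> powr ((2 - \<beta>) / (2 * (\<beta> - 1))))
                \<le> chord_len A (\<theta> + pi / 2) l \<and>
              chord_len A (\<theta> + pi / 2) l
                \<le> c2 * (l powr (1/2) * \<bar>\<theta>\<bar> powr ((2 - \<beta>) / (2 * (\<beta> - 1))))))))"
  apply (rule exI[of _ "1 / 100"], intro conjI allI impI, simp)
  subgoal for \<beta>
    apply (rule exI[of _ "chord_lower_const \<beta>"], rule conjI, rule chord_lower_const_pos)
    apply (rule exI[of _ "chord_upper_const \<beta>"], rule conjI, simp add: chord_upper_const_pos)
    using graph_body.chord_len_estimates[OF graph_body.intro, of \<beta>] by auto
  done

end
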